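(* Let $C\ge 0$, let $D_1,\dots,D_n\subseteq\mathbb{Z}$ each be a nonempty finite set of consecutive integers, let $D^n=D_1\times\cdots\times D_n$, and let $(D^n,f)$ be an Ameso($C$) pair. Let $1\le j\le n$ and let $i_1,\dots,i_j\in\{1,\dots,n\}$ be distinct. Define $\Delta^j_{i_1,\dots,i_j}=D_{i_1}\times\cdots\times D_{i_j}$ and, for $(x_{i_1},\dots,x_{i_j})\in\Delta^j_{i_1,\dots,i_j}$, the conditional function $f^*_{i_1,\dots,i_j}(x_{i_1},\dots,x_{i_j})=\min\{f(\vec y):\vec y=(y_1,\dots,y_n)\in D^n,\ y_{i_k}=x_{i_k}\ \text{for } k=1,\dots,j\}$. Then $(\Delta^j_{i_1,\dots,i_j},f^*_{i_1,\dots,i_j})$ is a $j$-dimensional Ameso($C$) pair.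
   Context: Floors and ceilings of vectors are taken componentwise. A set $D^n\subseteq\mathbb{Z}^n$ is an Ameso set if $\lceil(\vec x+\vec y)/2\rceil,\lfloor(\vec x+\vec y)/2\rfloor\in D^n$ for all $\vec x,\vec y\in D^n$. For $C\ge 0$, $(D^n,f)$ is an Ameso($C$) pair if $D^n$ is an Ameso set, $f:D^n\to\mathbb{R}$ is bounded below, and $f(\vec x)+f(\vec y)+C\ge f(\lceil(\vec x+\vec y)/2\rceil)+f(\lfloor(\vec x+\vec y)/2\rfloor)$ for all $\vec x,\vec y\in D^n$. *)

theory Defs
  imports Complex_Main
begin

text \<open>Vectors of \<int>^n are represented as integer lists of length n (0-based indices).
  Componentwise ceiling / floor of the midpoint (x+y)/2.\<close>

definition ceil_mid :: "int list \<Rightarrow> int list \<Rightarrow> int list" where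
  "ceil_mid x y = map2 (\<lambda>a b. \<lceil>real_of_int (a + b) / 2\<rceil>) x y"

definition floor_mid :: "int list \<Rightarrow> int list \<Rightarrow> int list" where
  "floor_mid x y = map2 (\<lambda>a b. \<lfloor>real_of_int (a + b) / 2\<rfloor>) x y"

definition ameso_set :: "int list set \<Rightarrow> bool" where
  "ameso_set D \<longleftrightarrow> (\<forall>x\<in>D. \<forall>y\<in>D. ceil_mid x y \<in> D \<and> floor_mid x y \<in> D)"

definition ameso_pair :: "real \<Rightarrow> int list set \<Rightarrow> (int list \<Rightarrow> real) \<Rightarrow> bool" where
  "ameso_pair C D f \<longleftrightarrow> ameso_set D \<and> bdd_below (f ` D) \<and>
     (\<forall>x\<in>D. \<forall>y\<in>D. f x + f y + C \<ge> f (ceil_mid x y) + f (floor_mid x y))"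

definition prod_dom :: "nat \<Rightarrow> (nat \<Rightarrow> int set) \<Rightarrow> int list set" where
  "prod_dom n Ds = {x. length x = n \<and> (\<forall>k<n. x ! k \<in> Ds k)}"

definition cond_fun :: "int list set \<Rightarrow> (int list \<Rightarrow> real) \<Rightarrow> nat list \<Rightarrow> int list \<Rightarrow> real" where
  "cond_fun Dn f is x = Min (f ` {y \<in> Dn. \<forall>k<length is. y ! (is ! k) = x ! k})"

end

theory Submission
  imports Defs
begin

(* Pick minimisers u of f on the fibre over x and v on the fibre over y. Since the coordinates
   selected by is commute with taking rounded midpoints, the midpoints of u and v lie in the
   fibres over the midpoints of x and y, so the conditional function there is at most
   f (ceil_mid u v) and f (floor_mid u v); the Ameso(C) inequality for f at u, v then gives the
   inequality for the conditional function at x, y. The domain of the conditional function is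
   again a product of intervals, hence an Ameso set. *)

lemma length_ceil_mid [simp]: "length (ceil_mid x y) = min (length x) (length y)"
  by (simp add: ceil_mid_def)

lemma length_floor_mid [simp]: "length (floor_mid x y) = min (length x) (length y)"
  by (simp add: floor_mid_def)

lemma nth_ceil_mid [simp]:
  "k < length x \<Longrightarrow> k < length y \<Longrightarrow> ceil_mid x y ! k = \<lceil>real_of_int (x ! k + y ! k) / 2\<rceil>"
  by (simp add: ceil_mid_def)

lemma nth_floor_mid [simp]:
  "k < length x \<Longrightarrow> k < length y \<Longrightarrow> floor_mid x y ! k = \<lfloor>real_of_int (x ! k + y ! k) / 2\<rfloor>"
  by (simp add: floor_mid_def)

lemma ceiling_midpoint_in_interval:
  fixes a b c d :: int
  assumes "c \<in> {a..b}" "d \<in> {a..b}"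
  shows "\<lceil>real_of_int (c + d) / 2\<rceil> \<in> {a..b}"
  using assms by (simp add: ceiling_le_iff le_ceiling_iff)

lemma floor_midpoint_in_interval:
  fixes a b c d :: int
  assumes "c \<in> {a..b}" "d \<in> {a..b}"
  shows "\<lfloor>real_of_int (c + d) / 2\<rfloor> \<in> {a..b}"
  using assms by (simp add: floor_le_iff le_floor_iff)

lemma ameso_set_prod_dom:
  assumes "\<forall>k<m. \<exists>a b. Es k = {a..b}"
  shows "ameso_set (prod_dom m Es)"
  unfolding ameso_set_def
proof (intro ballI conjI)
  fix x y assume x: "x \<in> prod_dom m Es" and y: "y \<in> prod_dom m Es"
  have coord: "x ! k \<in> Es k" "y ! k \<in> Es k" if "k < m" for k
    using x y that by (auto simp: prod_dom_def)
  have "\<lceil>real_of_int (x ! k + y ! k) / 2\<rceil> \<in> Es k \<and> \<lfloor>real_of_int (x ! k + y ! k) / 2\<rfloor> \<in> Es k"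
    if "k < m" for k
    using assms coord[OF that] ceiling_midpoint_in_interval floor_midpoint_in_interval that
    by metis
  with x y show "ceil_mid x y \<in> prod_dom m Es" "floor_mid x y \<in> prod_dom m Es"
    by (auto simp: prod_dom_def)
qed

lemma finite_prod_dom:
  assumes "\<forall>k<m. finite (Es k)"
  shows "finite (prod_dom m Es)"
proof (rule finite_subset)
  show "prod_dom m Es \<subseteq> {xs. set xs \<subseteq> (\<Union>k<m. Es k) \<and> length xs = m}"
    by (force simp: prod_dom_def in_set_conv_nth)
  show "finite {xs. set xs \<subseteq> (\<Union>k<m. Es k) \<and> length xs = m}"
    using assms by (simp add: finite_lists_length_eq)
qed

definition cond_fibre :: "int list set \<Rightarrow> nat list \<Rightarrow> int list \<Rightarrow> int list set" where
  "cond_fibre Dn is x = {y \<in> Dn. \<forall>k<length is. y ! (is ! k) = x ! k}"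

lemma cond_fun_eq_Min_cond_fibre: "cond_fun Dn f is x = Min (f ` cond_fibre Dn is x)"
  by (simp add: cond_fun_def cond_fibre_def)

lemma cond_fibre_prod_dom_nonempty:
  assumes "distinct is" "set is \<subseteq> {..<n}" "\<forall>k<n. Ds k \<noteq> {}"
    and x: "x \<in> prod_dom (length is) (\<lambda>k. Ds (is ! k))"
  shows "cond_fibre (prod_dom n Ds) is x \<noteq> {}"
proof -
  have lx: "length is = length x"
    using x by (simp add: prod_dom_def)
  define w where
    "w = map (\<lambda>i. case map_of (zip is x) i of Some a \<Rightarrow> a | None \<Rightarrow> SOME a. a \<in> Ds i) [0..<n]"
  have w_is: "w ! (is ! k) = x ! k" if "k < length is" for k
  proof -
    have "is ! k < n"
      using assms(2) nth_mem[OF that] by auto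
    then show ?thesis
      using map_of_zip_nth[OF lx assms(1)] that lx by (simp add: w_def)
  qed
  have "w ! i \<in> Ds i" if "i < n" for i
  proof (cases "i \<in> set is")
    case True
    then obtain k where "k < length is" "is ! k = i"
      by (auto simp: in_set_conv_nth)
    then show ?thesis
      using w_is x by (auto simp: prod_dom_def)
  next
    case False
    then have "map_of (zip is x) i = None"
      using lx by simp
    then show ?thesis
      using assms(3) that by (simp add: w_def some_in_eq)
  qed
  then have "w \<in> cond_fibre (prod_dom n Ds) is x"
    using w_is by (simp add: cond_fibre_def prod_dom_def w_def)
  then show ?thesis by blast
qed

lemma
  assumes "ameso_set Dn" "\<forall>y\<in>Dn. length y = n" "set is \<subseteq> {..<n}"
    and "length x = length is" "length y = length is"
    and "u \<in> cond_fibre Dn is x" "v \<in> cond_fibre Dn is y"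
  shows ceil_mid_in_cond_fibre: "ceil_mid u v \<in> cond_fibre Dn is (ceil_mid x y)"
    and floor_mid_in_cond_fibre: "floor_mid u v \<in> cond_fibre Dn is (floor_mid x y)"
proof -
  have "u \<in> Dn" "v \<in> Dn" "length u = n" "length v = n"
    using assms(2,6,7) by (auto simp: cond_fibre_def)
  moreover have "is ! k < n" if "k < length is" for k
    using assms(3) nth_mem[OF that] by auto
  ultimately show "ceil_mid u v \<in> cond_fibre Dn is (ceil_mid x y)"
    and "floor_mid u v \<in> cond_fibre Dn is (floor_mid x y)"
    using assms(1,4-7) by (auto simp: cond_fibre_def ameso_set_def)
qed

lemma ameso_pair_cond_fun:
  assumes f: "ameso_pair C Dn f" and "finite Dn" "\<forall>y\<in>Dn. length y = n" "set is \<subseteq> {..<n}"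
    and Dl: "ameso_set Dl" "\<forall>x\<in>Dl. length x = length is"
    and fibre_nonempty: "\<forall>x\<in>Dl. cond_fibre Dn is x \<noteq> {}"
  shows "ameso_pair C Dl (cond_fun Dn f is)"
proof -
  let ?g = "cond_fun Dn f is"
  have fibre_finite: "finite (cond_fibre Dn is x)" for x
    using \<open>finite Dn\<close> by (simp add: cond_fibre_def)
  have g_attained: "\<exists>u\<in>cond_fibre Dn is x. ?g x = f u" if "x \<in> Dl" for x
  proof -
    have "Min (f ` cond_fibre Dn is x) \<in> f ` cond_fibre Dn is x"
      using fibre_finite fibre_nonempty that by (intro Min_in) auto
    then show ?thesis
      by (auto simp: cond_fun_eq_Min_cond_fibre)
  qed
  have g_le: "?g x \<le> f u" if "u \<in> cond_fibre Dn is x" for x u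
    using fibre_finite that by (simp add: cond_fun_eq_Min_cond_fibre)
  have "?g ` Dl \<subseteq> f ` Dn"
    using g_attained by (force simp: cond_fibre_def)
  then have "bdd_below (?g ` Dl)"
    using f by (auto simp: ameso_pair_def intro: bdd_below_mono)
  moreover have "?g (ceil_mid x y) + ?g (floor_mid x y) \<le> ?g x + ?g y + C"
    if "x \<in> Dl" "y \<in> Dl" for x y
  proof -
    obtain u v where u: "u \<in> cond_fibre Dn is x" "?g x = f u"
      and v: "v \<in> cond_fibre Dn is y" "?g y = f v"
      using g_attained \<open>x \<in> Dl\<close> \<open>y \<in> Dl\<close> by metis
    have "ceil_mid u v \<in> cond_fibre Dn is (ceil_mid x y)"
      and "floor_mid u v \<in> cond_fibre Dn is (floor_mid x y)"
      using f assms(3,4) Dl that u(1) v(1)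
      by (auto simp: ameso_pair_def intro: ceil_mid_in_cond_fibre floor_mid_in_cond_fibre)
    then have "?g (ceil_mid x y) + ?g (floor_mid x y) \<le> f (ceil_mid u v) + f (floor_mid u v)"
      by (intro add_mono g_le)
    also have "\<dots> \<le> f u + f v + C"
      using f u(1) v(1) by (auto simp: ameso_pair_def cond_fibre_def)
    finally show ?thesis using u(2) v(2) by simp
  qed
  ultimately show ?thesis
    using Dl by (simp add: ameso_pair_def)
qed

theorem mainTheorem10:
  fixes C :: real and n :: nat and Ds :: "nat \<Rightarrow> int set"
    and f :: "int list \<Rightarrow> real" and "is" :: "nat list"
  assumes "C \<ge> 0"
    and "\<forall>k<n. \<exists>a b. a \<le> b \<and> Ds k = {a..b}"
    and "ameso_pair C (prod_dom n Ds) f"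
    and "1 \<le> length is" and "length is \<le> n"
    and "distinct is" and "set is \<subseteq> {0..<n}"
  shows "ameso_pair C (prod_dom (length is) (\<lambda>k. Ds (is ! k)))
           (cond_fun (prod_dom n Ds) f is)
       \<and> prod_dom (length is) (\<lambda>k. Ds (is ! k)) \<subseteq> {x. length x = length is}"
proof -
  let ?Dl = "prod_dom (length is) (\<lambda>k. Ds (is ! k))"
  have is_below_n: "set is \<subseteq> {..<n}" and is_nth_below_n: "\<forall>k<length is. is ! k < n"
    using assms(7) nth_mem by fastforce+
  have Dl_lengths: "?Dl \<subseteq> {x. length x = length is}"
    by (auto simp: prod_dom_def)
  have "ameso_set ?Dl"
    using assms(2) is_nth_below_n by (intro ameso_set_prod_dom) blast
  moreover have "finite (prod_dom n Ds)"
    using assms(2) by (intro finite_prod_dom) auto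
  moreover have "\<forall>x\<in>?Dl. cond_fibre (prod_dom n Ds) is x \<noteq> {}"
    using assms(2,6) is_below_n by (intro ballI cond_fibre_prod_dom_nonempty) fastforce+
  ultimately have "ameso_pair C ?Dl (cond_fun (prod_dom n Ds) f is)"
    using assms(3) is_below_n Dl_lengths
    by (intro ameso_pair_cond_fun[where n = n]) (auto simp: prod_dom_def)
  with Dl_lengths show ?thesis by blast
qed

end
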